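(* Let $\lambda\in\mathbb{R}\setminus\Sigma_0$. Then $\lambda\in\bigcup_{\Theta\in[-\pi,\pi]^2}\sigma(\mathcal{A}^\Theta)$ (i.e. $\lambda\in\sigma(\mathcal A)$) if and only if there exists $(\theta_1,\theta_2)\in[-\pi,\pi]^2$ such that $$(1\ \ \rho)\,\mathbb{M}\begin{pmatrix}1\\0\end{pmatrix}-\frac{\lambda m}{3a}\,(1\ \ \rho)\,\mathbb{M}\begin{pmatrix}\rho\\1\end{pmatrix}=\pm\frac{|S(\theta_1,\theta_2)|}{3},$$ equivalently $\mathcal{D}_1(\lambda)-\frac{\lambda m}{3a}\mathcal{D}_0(\lambda)=\pm|S(\theta_1,\theta_2)|/3$.
   Context: Fix $a>0$, $\kappa^{-1}\ge 0$, $m\ge 0$, $\rho:=a\kappa^{-1}$, and a real symmetric potential $q_0\in L^\infty(0,1)$, $q_0(x)=q_0(1-x)$. The hexagonal lattice $G$ (edges of length 1, identified with $[0,1]$, potential $q_0$ on each edge) carries the Hamiltonian $\mathcal A$: $u_e\mapsto -au_e''+q_0u_e$ with vertex conditions at each vertex $v$ ($\partial_nu_e(v)$ = outward derivative: $-u_e'(0)$ at $x=0$, $u_e'(1)$ at $x=1$): $u_e(v)+\rho\,\partial_nu_e(v)=\omega_v$ for all $e\ni v$ and $a\sum_{e\ni v}\partial_nu_e(v)=\lambda m\,\omega_v$. By Floquet–Bloch theory $\sigma(\mathcal A)=\bigcup_\Theta\sigma(\mathcal A^\Theta)$, where for $\Theta=(\theta_1,\theta_2)\in[-\pi,\pi]^2$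 a real $\lambda\in\sigma(\mathcal A^\Theta)$ iff there are $u_1,u_2,u_3\in H^2(0,1)$, $\omega_0,\omega_1\in\mathbb C$, not all zero, with $-au_j''+q_0u_j=\lambda u_j$, $u_j(0)-\rho u_j'(0)=\omega_0$ ($j=1,2,3$), $-a\sum_ju_j'(0)=\lambda m\omega_0$, $u_1(1)+\rho u_1'(1)=e^{i\theta_1}(u_2(1)+\rho u_2'(1))=e^{i\theta_2}(u_3(1)+\rho u_3'(1))=\omega_1$, $a(u_1'(1)+e^{i\theta_1}u_2'(1)+e^{i\theta_2}u_3'(1))=\lambda m\omega_1$. $S(\theta_1,\theta_2):=1+e^{-i\theta_1}+e^{-i\theta_2}$. $\Sigma_0$: set of real $\lambda$ for which $-au''+q_0u=\lambda u$, $u(0)-\rho u'(0)=0$, $u(1)+\rho u'(1)=0$ has a nontrivial solution. Fundamental solutions: $c_\lambda,s_\lambda$ solve $-ay''+q_0y=\lambda y$ on $[0,1]$ with $c_\lambda(0)=1,c_\lambda'(0)=0,s_\lambda(0)=0,s_\lambda'(0)=1$; monodromy matrix $\mathbb M=\begin{pmatrix}c_\lambda(1)&s_\lambda(1)\\c_\lambda'(1)&s_\lambda'(1)\end{pmatrix}$. $\mathcal D_1(\lambda):=c_\lambda(1)+\rho c_\lambda'(1)$, $\mathcal D_2(\lambda):=s_\lambda(1)+\rho s_\lambda'(1)$, $\mathcal D_0(\lambda):=\mathcal D_2(\lambda)+\rho\mathcal D_1(\lambda)$. *)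

theory Defs
  imports "HOL-Analysis.Analysis"
begin

text \<open>Solutions of the edge equation  -a y'' + q0 y = lam y  on [0,1], in integrated
  (H^2 / absolutely continuous) form: yd is the derivative of y and yd' = ((q0 - lam)/a) y a.e.
  Both y and its derivative yd are indefinite integrals on [0,1].\<close>
definition edge_sol :: "real \<Rightarrow> (real \<Rightarrow> real) \<Rightarrow> real \<Rightarrow>
    (real \<Rightarrow> 'b::real_normed_vector) \<Rightarrow> (real \<Rightarrow> 'b) \<Rightarrow> bool" where
  "edge_sol a q0 lam y yd \<longleftrightarrow>
     (\<forall>x\<in>{0..1}. (yd has_integral (y x - y 0)) {0..x} \<and>
        ((\<lambda>t. ((q0 t - lam) / a) *\<^sub>R y t) has_integral (yd x - yd 0)) {0..x})"

definition fund_c :: "real \<Rightarrow> (real \<Rightarrow> real) \<Rightarrow> real \<Rightarrow> (real \<Rightarrow> real) \<times> (real \<Rightarrow> real)" where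
  "fund_c a q0 lam = (SOME p. edge_sol a q0 lam (fst p) (snd p) \<and> fst p 0 = 1 \<and> snd p 0 = 0)"

definition fund_s :: "real \<Rightarrow> (real \<Rightarrow> real) \<Rightarrow> real \<Rightarrow> (real \<Rightarrow> real) \<times> (real \<Rightarrow> real)" where
  "fund_s a q0 lam = (SOME p. edge_sol a q0 lam (fst p) (snd p) \<and> fst p 0 = 0 \<and> snd p 0 = 1)"

definition D1 :: "real \<Rightarrow> real \<Rightarrow> (real \<Rightarrow> real) \<Rightarrow> real \<Rightarrow> real" where
  "D1 a rho q0 lam = fst (fund_c a q0 lam) 1 + rho * snd (fund_c a q0 lam) 1"

definition D2 :: "real \<Rightarrow> real \<Rightarrow> (real \<Rightarrow> real) \<Rightarrow> real \<Rightarrow> real" where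
  "D2 a rho q0 lam = fst (fund_s a q0 lam) 1 + rho * snd (fund_s a q0 lam) 1"

definition D0 :: "real \<Rightarrow> real \<Rightarrow> (real \<Rightarrow> real) \<Rightarrow> real \<Rightarrow> real" where
  "D0 a rho q0 lam = D2 a rho q0 lam + rho * D1 a rho q0 lam"

definition Sfun :: "real \<Rightarrow> real \<Rightarrow> complex" where
  "Sfun th1 th2 = 1 + exp (- \<i> * complex_of_real th1) + exp (- \<i> * complex_of_real th2)"

definition Sigma0 :: "real \<Rightarrow> real \<Rightarrow> (real \<Rightarrow> real) \<Rightarrow> real set" where
  "Sigma0 a rho q0 = {lam. \<exists>u ud :: real \<Rightarrow> complex. edge_sol a q0 lam u ud \<and>
      u 0 - rho *\<^sub>R ud 0 = 0 \<and> u 1 + rho *\<^sub>R ud 1 = 0 \<and> (\<exists>x\<in>{0..1}. u x \<noteq> 0)}"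

text \<open>Real spectrum of the Floquet--Bloch fibre operator A^Theta.\<close>
definition spec_theta :: "real \<Rightarrow> real \<Rightarrow> real \<Rightarrow> (real \<Rightarrow> real) \<Rightarrow> real \<Rightarrow> real \<Rightarrow> real set" where
  "spec_theta a rho m q0 th1 th2 = {lam. \<exists>(u1::real\<Rightarrow>complex) u1d u2 u2d u3 u3d (w0::complex) w1.
      edge_sol a q0 lam u1 u1d \<and> edge_sol a q0 lam u2 u2d \<and> edge_sol a q0 lam u3 u3d \<and>
      u1 0 - rho *\<^sub>R u1d 0 = w0 \<and> u2 0 - rho *\<^sub>R u2d 0 = w0 \<and> u3 0 - rho *\<^sub>R u3d 0 = w0 \<and>
      - a *\<^sub>R (u1d 0 + u2d 0 + u3d 0) = (lam * m) *\<^sub>R w0 \<and>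
      u1 1 + rho *\<^sub>R u1d 1 = w1 \<and>
      exp (\<i> * complex_of_real th1) * (u2 1 + rho *\<^sub>R u2d 1) = w1 \<and>
      exp (\<i> * complex_of_real th2) * (u3 1 + rho *\<^sub>R u3d 1) = w1 \<and>
      a *\<^sub>R (u1d 1 + exp (\<i> * complex_of_real th1) * u2d 1 + exp (\<i> * complex_of_real th2) * u3d 1)
        = (lam * m) *\<^sub>R w1 \<and>
      ((\<exists>x\<in>{0..1}. u1 x \<noteq> 0 \<or> u2 x \<noteq> 0 \<or> u3 x \<noteq> 0) \<or> w0 \<noteq> 0 \<or> w1 \<noteq> 0)}"

end

theory Submission
  imports Defs
begin

text \<open>
  Let \<open>c, s\<close> be the fundamental solutions on an edge. A solution \<open>u\<close> is determined by
  its Robin data \<open>w = u(0) - \<rho> u'(0)\<close> and \<open>b = u'(0)\<close>, and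
  \<open>u(1) + \<rho> u'(1) = w D\<^sub>1 + b D\<^sub>0\<close>, \<open>u'(1) = w c'(1) + b D\<^sub>1\<close>.
  The second formula needs \<open>s'(1) = c(1)\<close>, which follows from the symmetry of \<open>q\<^sub>0\<close>
  together with \<open>D\<^sub>0 \<noteq> 0\<close>.

  Off \<open>\<Sigma>\<^sub>0\<close> we have \<open>D\<^sub>0 \<noteq> 0\<close>, so the vertex conditions can be solved for the
  three derivatives \<open>u\<^sub>j'(0)\<close>. Using \<open>c'(1) D\<^sub>0 - D\<^sub>1\<^sup>2 = -1\<close>, what remains is
  \<open>S \<omega>\<^sub>1 = 3F \<omega>\<^sub>0\<close>, \<open>conj S \<omega>\<^sub>0 = 3F \<omega>\<^sub>1\<close> with
  \<open>F = D\<^sub>1 - \<lambda>m D\<^sub>0 / (3a)\<close>, which has a nonzero solution iff \<open>|S| = 3|F|\<close>.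

  Since \<open>q\<^sub>0\<close> is only bounded and measurable, existence and uniqueness of edge solutions
  come from a Picard iteration, which contracts in an exponentially weighted sup norm.
\<close>

definition extend01 :: "(real \<Rightarrow> 'b::metric_space) \<Rightarrow> real \<Rightarrow>\<^sub>C 'b" where
  "extend01 f = (SOME g. \<forall>x. apply_bcontfun g x = f (clamp 0 1 x))"

lemma extend01_apply:
  fixes f :: "real \<Rightarrow> 'b::metric_space"
  assumes "continuous_on {0..1} f"
  shows "extend01 f x = f (clamp 0 1 x)"
proof -
  obtain g :: "real \<Rightarrow>\<^sub>C 'b" where "\<And>x. g x = f (clamp 0 1 x)"
    using continuous_on_cbox_bcontfunE[of 0 1 f] assms by auto
  then have "\<exists>g :: real \<Rightarrow>\<^sub>C 'b. \<forall>x. g x = f (clamp 0 1 x)" by blast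
  from someI_ex[OF this] show ?thesis unfolding extend01_def by blast
qed

lemma clamp01_mem: "clamp 0 1 (x::real) \<in> {0..1}"
  using clamp_in_interval[of 0 1 x] by simp

lemma clamp01_id: "(x::real) \<in> {0..1} \<Longrightarrow> clamp 0 1 x = x"
  using clamp_cancel_cbox[of x 0 1] by simp

lemma extend01_eq: "continuous_on {0..1} f \<Longrightarrow> x \<in> {0..1} \<Longrightarrow> extend01 f x = f x"
  by (simp add: extend01_apply clamp01_id)

lemma extend01_cong:
  assumes "continuous_on {0..1} f" "continuous_on {0..1} g" "\<And>x. x \<in> {0..1} \<Longrightarrow> f x = g x"
  shows "extend01 f = extend01 g"
  by (rule bcontfun_eqI) (simp add: assms(1,2) extend01_apply assms(3)[OF clamp01_mem])

definition weighted_primitive :: "real \<Rightarrow> real \<Rightarrow> (real \<Rightarrow> real) \<Rightarrow> real \<Rightarrow> real" where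
  "weighted_primitive L c g x = exp (- (L * x)) * (c + integral {0..x} (\<lambda>s. exp (L * s) * g s))"

lemma continuous_on_weighted_primitive:
  assumes "(\<lambda>s. exp (L * s) * g s) integrable_on {0..1}"
  shows "continuous_on {0..1} (weighted_primitive L c g)"
  unfolding weighted_primitive_def[abs_def]
  by (intro continuous_intros indefinite_integral_continuous_1 assms)

lemma weighted_primitive_eq:
  assumes "(h has_integral (f x - f 0)) {0..x}" and "\<And>s. s \<in> {0..x} \<Longrightarrow> exp (L * s) * g s = h s"
  shows "weighted_primitive L (f 0) g x = exp (- (L * x)) * f x"
proof -
  have "integral {0..x} (\<lambda>s. exp (L * s) * g s) = f x - f 0"
    using integral_cong[of "{0..x}", OF assms(2)] integral_unique[OF assms(1)] by simp
  then show ?thesis by (simp add: weighted_primitive_def)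
qed

lemma weighted_primitive_dist:
  assumes L: "L > 0" and x: "0 \<le> x"
    and g: "(\<lambda>s. exp (L * s) * g s) integrable_on {0..x}"
    and g': "(\<lambda>s. exp (L * s) * g' s) integrable_on {0..x}"
    and C: "\<And>s. s \<in> {0..x} \<Longrightarrow> \<bar>g s - g' s\<bar> \<le> C"
  shows "\<bar>weighted_primitive L c g x - weighted_primitive L c g' x\<bar> \<le> C / L"
proof -
  have "C \<ge> 0" using C[of 0] x by force
  have "((\<lambda>s. exp (L * s)) has_integral exp (L * x) / L - exp (L * 0) / L) {0..x}"
    using x L by (intro fundamental_theorem_of_calculus)
      (auto intro!: derivative_eq_intros simp flip: has_real_derivative_iff_has_vector_derivative)
  then have exp_int: "((\<lambda>s. C * exp (L * s)) has_integral C * ((exp (L * x) - 1) / L)) {0..x}"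
    by (intro has_integral_mult_right) (simp add: diff_divide_distrib)
  have "norm (integral {0..x} (\<lambda>s. exp (L * s) * g s - exp (L * s) * g' s))
        \<le> integral {0..x} (\<lambda>s. C * exp (L * s))"
  proof (rule integral_norm_bound_integral)
    show "(\<lambda>s. exp (L * s) * g s - exp (L * s) * g' s) integrable_on {0..x}"
      using g g' by (rule integrable_diff)
    show "(\<lambda>s. C * exp (L * s)) integrable_on {0..x}"
      using exp_int by blast
    show "norm (exp (L * s) * g s - exp (L * s) * g' s) \<le> C * exp (L * s)" if "s \<in> {0..x}" for s
    proof -
      have "norm (exp (L * s) * g s - exp (L * s) * g' s) = exp (L * s) * \<bar>g s - g' s\<bar>"
        by (simp add: abs_mult flip: right_diff_distrib)
      also have "\<dots> \<le> C * exp (L * s)"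
        using C[OF that] by (simp add: mult.commute)
      finally show ?thesis .
    qed
  qed
  also have "\<dots> = C * ((exp (L * x) - 1) / L)"
    using exp_int by (rule integral_unique)
  finally have bound: "\<bar>integral {0..x} (\<lambda>s. exp (L * s) * g s - exp (L * s) * g' s)\<bar>
      \<le> C * ((exp (L * x) - 1) / L)" by simp
  have "weighted_primitive L c g x - weighted_primitive L c g' x
      = exp (- (L * x)) * integral {0..x} (\<lambda>s. exp (L * s) * g s - exp (L * s) * g' s)"
    unfolding weighted_primitive_def integral_diff[OF g g'] by (simp add: algebra_simps)
  then have "\<bar>weighted_primitive L c g x - weighted_primitive L c g' x\<bar>
      \<le> exp (- (L * x)) * (C * ((exp (L * x) - 1) / L))"
    using mult_left_mono[OF bound, of "exp (- (L * x))"] by (simp add: abs_mult)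
  also have "\<dots> = C * (1 - exp (- (L * x))) / L"
    by (simp add: field_simps exp_minus)
  also have "\<dots> \<le> C / L"
    using \<open>C \<ge> 0\<close> L by (simp add: divide_right_mono mult_left_le)
  finally show ?thesis .
qed

section \<open>Solutions of the edge equation\<close>

lemma has_integral_reflect01:
  fixes f :: "real \<Rightarrow> 'b::real_normed_vector"
  assumes "(f has_integral i) {1 - x..1}"
  shows "((\<lambda>s. f (1 - s)) has_integral i) {0..x}"
proof -
  have "((\<lambda>s. f (1 + s)) has_integral i) {-x..0}"
    using has_integral_affinity[of f i "1 - x" 1 1 1] assms by (simp add: add.commute)
  then show ?thesis
    using has_integral_reflect_real[of "\<lambda>s. f (1 + s)" i 0 "-x"] by simp
qed

lemma edge_sol_continuous:
  fixes y yd :: "real \<Rightarrow> 'b::banach"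
  assumes "edge_sol a q0 lam y yd"
  shows "continuous_on {0..1} y" "continuous_on {0..1} yd"
proof -
  have y: "(yd has_integral (y x - y 0)) {0..x}"
    and yd: "((\<lambda>t. ((q0 t - lam) / a) *\<^sub>R y t) has_integral (yd x - yd 0)) {0..x}"
    if "x \<in> {0..1}" for x
    using assms that unfolding edge_sol_def by auto
  have "continuous_on {0..1} (\<lambda>x. y 0 + integral {0..x} yd)"
    using y[of 1] by (intro continuous_intros indefinite_integral_continuous_1) auto
  then show "continuous_on {0..1} y"
    by (rule continuous_on_eq) (simp add: integral_unique[OF y])
  have "continuous_on {0..1} (\<lambda>x. yd 0 + integral {0..x} (\<lambda>t. ((q0 t - lam) / a) *\<^sub>R y t))"
    using yd[of 1] by (intro continuous_intros indefinite_integral_continuous_1) auto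
  then show "continuous_on {0..1} yd"
    by (rule continuous_on_eq) (simp add: integral_unique[OF yd])
qed

lemma has_integral_from_0_diff:
  fixes F f :: "real \<Rightarrow> 'b::banach"
  assumes t: "(f has_integral (F t - F 0)) {0..t}" and s: "(f has_integral (F s - F 0)) {0..s}"
    and "0 \<le> s" "s \<le> t"
  shows "(f has_integral (F t - F s)) {s..t}"
proof -
  have "{s..t} \<subseteq> {0..t}" using assms(3) by auto
  with t have "f integrable_on {s..t}"
    by (metis integrable_on_subinterval box_real(2) has_integral_integrable)
  then obtain j where j: "(f has_integral j) {s..t}" by blast
  have "(f has_integral (F s - F 0) + j) {0..t}"
    using assms(3,4) s j by (rule has_integral_combine)
  then have "(F s - F 0) + j = F t - F 0"
    using t by (rule has_integral_unique)
  then have "j = F t - F s" by (simp add: algebra_simps)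
  then show ?thesis using j by simp
qed

lemma edge_sol_increment:
  fixes y yd :: "real \<Rightarrow> 'b::banach"
  assumes sol: "edge_sol a q0 lam y yd" and "0 \<le> s" "s \<le> t" "t \<le> 1"
  shows "(yd has_integral (y t - y s)) {s..t}"
    and "((\<lambda>r. ((q0 r - lam) / a) *\<^sub>R y r) has_integral (yd t - yd s)) {s..t}"
proof -
  have "s \<in> {0..1}" "t \<in> {0..1}" using assms(2-4) by auto
  then show "(yd has_integral (y t - y s)) {s..t}"
    and "((\<lambda>r. ((q0 r - lam) / a) *\<^sub>R y r) has_integral (yd t - yd s)) {s..t}"
    using sol assms(2,3) unfolding edge_sol_def by (blast intro: has_integral_from_0_diff)+
qed

lemma edge_sol_bounded_linear:
  assumes f: "bounded_linear f" and sol: "edge_sol a q0 lam y yd"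
  shows "edge_sol a q0 lam (\<lambda>x. f (y x)) (\<lambda>x. f (yd x))"
  unfolding edge_sol_def
proof (intro ballI conjI)
  fix x :: real assume "x \<in> {0..1}"
  then have "(yd has_integral (y x - y 0)) {0..x}"
      "((\<lambda>t. ((q0 t - lam) / a) *\<^sub>R y t) has_integral (yd x - yd 0)) {0..x}"
    using sol unfolding edge_sol_def by auto
  note this[THEN has_integral_linear[OF _ f]]
  then show "((\<lambda>x. f (yd x)) has_integral (f (y x) - f (y 0))) {0..x}"
    and "((\<lambda>t. ((q0 t - lam) / a) *\<^sub>R f (y t)) has_integral (f (yd x) - f (yd 0))) {0..x}"
    using bounded_linear.linear[OF f]
    by (simp_all add: o_def linear_diff linear_scale)
qed

lemma edge_sol_add:
  assumes y: "edge_sol a q0 lam y yd" and z: "edge_sol a q0 lam z zd"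
  shows "edge_sol a q0 lam (\<lambda>x. y x + z x) (\<lambda>x. yd x + zd x)"
  unfolding edge_sol_def
proof (intro ballI conjI)
  fix x :: real assume "x \<in> {0..1}"
  then have "(yd has_integral (y x - y 0)) {0..x}" "(zd has_integral (z x - z 0)) {0..x}"
      "((\<lambda>t. ((q0 t - lam) / a) *\<^sub>R y t) has_integral (yd x - yd 0)) {0..x}"
      "((\<lambda>t. ((q0 t - lam) / a) *\<^sub>R z t) has_integral (zd x - zd 0)) {0..x}"
    using y z unfolding edge_sol_def by auto
  from has_integral_add[OF this(1,2)] has_integral_add[OF this(3,4)]
  show "((\<lambda>x. yd x + zd x) has_integral (y x + z x - (y 0 + z 0))) {0..x}"
    and "((\<lambda>t. ((q0 t - lam) / a) *\<^sub>R (y t + z t)) has_integral (yd x + zd x - (yd 0 + zd 0))) {0..x}"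
    by (simp_all add: algebra_simps)
qed

lemma edge_sol_reflect:
  fixes y yd :: "real \<Rightarrow> 'b::banach"
  assumes sym: "\<forall>x\<in>{0..1}. q0 x = q0 (1 - x)" and sol: "edge_sol a q0 lam y yd"
  shows "edge_sol a q0 lam (\<lambda>x. y (1 - x)) (\<lambda>x. - yd (1 - x))"
  unfolding edge_sol_def
proof (intro ballI conjI)
  fix x :: real assume x: "x \<in> {0..1}"
  have "((\<lambda>s. yd (1 - s)) has_integral (y 1 - y (1 - x))) {0..x}"
    using x by (intro has_integral_reflect01 edge_sol_increment[OF sol]) auto
  from has_integral_neg[OF this]
  show "((\<lambda>x. - yd (1 - x)) has_integral (y (1 - x) - y (1 - 0))) {0..x}" by simp
  have "((\<lambda>s. ((q0 (1 - s) - lam) / a) *\<^sub>R y (1 - s)) has_integral (yd 1 - yd (1 - x))) {0..x}"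
    using x by (intro has_integral_reflect01 edge_sol_increment[OF sol]) auto
  then have "((\<lambda>s. ((q0 s - lam) / a) *\<^sub>R y (1 - s)) has_integral (yd 1 - yd (1 - x))) {0..x}"
  proof (rule has_integral_eq[rotated])
    fix s assume "s \<in> {0..x}"
    then have "q0 (1 - s) = q0 s" using sym x by (metis atLeastAtMost_iff order_trans)
    then show "((q0 (1 - s) - lam) / a) *\<^sub>R y (1 - s) = ((q0 s - lam) / a) *\<^sub>R y (1 - s)" by simp
  qed
  then show "((\<lambda>t. ((q0 t - lam) / a) *\<^sub>R y (1 - t)) has_integral (- yd (1 - x) - - yd (1 - 0))) {0..x}"
    by simp
qed

lemma edge_sol_vanishing_imp_derivative_0:
  fixes y yd :: "real \<Rightarrow> 'b::banach"
  assumes sol: "edge_sol a q0 lam y yd" and y0: "\<forall>x\<in>{0..1}. y x = 0"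
  shows "yd 0 = 0"
proof -
  have yd_const: "yd x = yd 0" if x: "x \<in> {0..1}" for x
  proof -
    have "((\<lambda>t. ((q0 t - lam) / a) *\<^sub>R y t) has_integral (yd x - yd 0)) {0..x}"
      using sol x unfolding edge_sol_def by blast
    then have "((\<lambda>_. 0) has_integral (yd x - yd 0)) {0..x}"
    proof (rule has_integral_eq[rotated])
      show "((q0 t - lam) / a) *\<^sub>R y t = 0" if "t \<in> {0..x}" for t
        using y0 x that by simp
    qed
    then show ?thesis by simp
  qed
  have "(yd has_integral (y 1 - y 0)) {0..1}"
    using sol unfolding edge_sol_def by auto
  then have "(yd has_integral 0) {0..1}" using y0 by simp
  then have "((\<lambda>_. yd 0) has_integral 0) {0..1::real}"
    by (rule has_integral_eq[rotated]) (rule yd_const)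
  moreover have "((\<lambda>_. yd 0) has_integral yd 0) {0..1::real}"
    using has_integral_const_real[of "yd 0" 0 1] by simp
  ultimately show ?thesis
    using has_integral_unique by metis
qed

section \<open>Existence and uniqueness by Picard iteration\<close>

locale edge_ode =
  fixes a :: real and q0 :: "real \<Rightarrow> real" and lam :: real
  assumes a_pos: "a > 0"
    and q0_measurable: "q0 \<in> borel_measurable (lebesgue_on {0..1})"
    and q0_bounded: "\<exists>B. \<forall>x\<in>{0..1}. \<bar>q0 x\<bar> \<le> B"
begin

definition p :: "real \<Rightarrow> real" where
  "p t = (q0 t - lam) / a"

lemma edge_sol_real_iff:
  fixes y yd :: "real \<Rightarrow> real"
  shows "edge_sol a q0 lam y yd \<longleftrightarrow> (\<forall>x\<in>{0..1}. (yd has_integral (y x - y 0)) {0..x} \<and>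
           ((\<lambda>t. p t * y t) has_integral (yd x - yd 0)) {0..x})"
  by (simp add: edge_sol_def p_def)

lemma p_bounded:
  obtains P where "\<And>x. x \<in> {0..1} \<Longrightarrow> \<bar>p x\<bar> \<le> P"
proof -
  obtain B where B: "\<forall>x\<in>{0..1}. \<bar>q0 x\<bar> \<le> B" using q0_bounded by blast
  show ?thesis
  proof (rule that)
    fix x :: real assume "x \<in> {0..1}"
    then have "\<bar>q0 x - lam\<bar> \<le> \<bar>B\<bar> + \<bar>lam\<bar>" using B by fastforce
    then show "\<bar>p x\<bar> \<le> (\<bar>B\<bar> + \<bar>lam\<bar>) / a"
      unfolding p_def using a_pos by (simp add: abs_div divide_right_mono)
  qed
qed

lemma integrable_p_times_continuous:
  assumes h: "continuous_on {0..1} h" and x: "x \<in> {0..1}"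
  shows "(\<lambda>s. p s * h s) integrable_on {0..x}"
proof -
  obtain P where P: "\<And>x. x \<in> {0..1} \<Longrightarrow> \<bar>p x\<bar> \<le> P" using p_bounded by blast
  have "(\<lambda>s. p s * h s) absolutely_integrable_on {0..1}"
  proof (rule absolutely_integrable_bounded_measurable_product_real)
    show "p \<in> borel_measurable (lebesgue_on {0..1})"
      unfolding p_def[abs_def] using q0_measurable by measurable
    show "bounded (p ` {0..1})"
      using P unfolding bounded_iff by (metis imageE real_norm_def)
    show "h absolutely_integrable_on {0..1}"
      using absolutely_integrable_continuous_real h by auto
  qed auto
  then have "(\<lambda>s. p s * h s) integrable_on {0..1}"
    by (simp add: absolutely_integrable_on_def)
  then show ?thesis
    using x by (metis integrable_on_subinterval atLeastAtMost_iff atLeastatMost_subset_iff order_refl)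
qed

lemma integrable_exp_times_p_times_bcontfun:
  "x \<in> {0..1} \<Longrightarrow> (\<lambda>s. exp (L * s) * (p s * apply_bcontfun F s)) integrable_on {0..x}"
  using integrable_p_times_continuous[of "\<lambda>s. exp (L * s) * F s" x]
  by (simp add: continuous_intros mult.left_commute)

lemma integrable_exp_times_bcontfun:
  fixes L x :: real
  shows "(\<lambda>s. exp (L * s) * apply_bcontfun G s) integrable_on {0..x}"
  by (intro integrable_continuous_interval continuous_intros continuous_on_apply_bcontfun)

text \<open>A fixed point \<open>(F, G)\<close> of \<open>picard_map L y0 yd0\<close> encodes the solution
  \<open>y = e\<^sup>L\<^sup>x F\<close>, \<open>y' = e\<^sup>L\<^sup>x G\<close> with \<open>y(0) = y0\<close>, \<open>y'(0) = yd0\<close>: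
  in these coordinates the sup distance is the weighted norm in which the Volterra map contracts
  once \<open>L\<close> dominates the potential.\<close>

definition picard_map :: "real \<Rightarrow> real \<Rightarrow> real \<Rightarrow> (real \<Rightarrow>\<^sub>C real) \<times> (real \<Rightarrow>\<^sub>C real)
    \<Rightarrow> (real \<Rightarrow>\<^sub>C real) \<times> (real \<Rightarrow>\<^sub>C real)" where
  "picard_map L y0 yd0 FG =
     (extend01 (weighted_primitive L y0 (snd FG)),
      extend01 (weighted_primitive L yd0 (\<lambda>s. p s * fst FG s)))"

lemma picard_map_apply:
  "fst (picard_map L y0 yd0 FG) x = weighted_primitive L y0 (snd FG) (clamp 0 1 x)"
  "snd (picard_map L y0 yd0 FG) x = weighted_primitive L yd0 (\<lambda>s. p s * fst FG s) (clamp 0 1 x)"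
  unfolding picard_map_def
  by (simp_all add: extend01_apply continuous_on_weighted_primitive
      integrable_exp_times_bcontfun integrable_exp_times_p_times_bcontfun)

lemma picard_map_dist_fst:
  assumes "L \<ge> 4"
  shows "dist (fst (picard_map L y0 yd0 X)) (fst (picard_map L y0 yd0 Y)) \<le> dist (snd X) (snd Y) / 4"
proof (rule dist_bound)
  fix x
  have "\<bar>weighted_primitive L y0 (snd X) (clamp 0 1 x) - weighted_primitive L y0 (snd Y) (clamp 0 1 x)\<bar>
      \<le> dist (snd X) (snd Y) / L"
    using assms clamp01_mem[of x]
    by (intro weighted_primitive_dist integrable_exp_times_bcontfun)
      (auto simp flip: dist_real_def intro: dist_bounded)
  also have "\<dots> \<le> dist (snd X) (snd Y) / 4"
    using assms by (intro divide_left_mono) auto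
  finally show "dist (fst (picard_map L y0 yd0 X) x) (fst (picard_map L y0 yd0 Y) x)
      \<le> dist (snd X) (snd Y) / 4"
    by (simp add: picard_map_apply dist_real_def)
qed

lemma picard_map_dist_snd:
  assumes P: "\<And>x. x \<in> {0..1} \<Longrightarrow> \<bar>p x\<bar> \<le> P" and L: "4 * P \<le> L" "L > 0"
  shows "dist (snd (picard_map L y0 yd0 X)) (snd (picard_map L y0 yd0 Y)) \<le> dist (fst X) (fst Y) / 4"
proof (rule dist_bound)
  fix x
  have "\<bar>p s * fst X s - p s * fst Y s\<bar> \<le> P * dist (fst X) (fst Y)" if "s \<in> {0..clamp 0 1 x}" for s
  proof -
    have "s \<in> {0..1}" using that clamp01_mem[of x] by auto
    then have "\<bar>p s\<bar> * \<bar>fst X s - fst Y s\<bar> \<le> P * dist (fst X) (fst Y)"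
      using P[of s] dist_bounded[of "fst X" s "fst Y"]
      by (intro mult_mono) (auto simp: dist_real_def)
    then show ?thesis by (simp add: abs_mult flip: right_diff_distrib)
  qed
  then have "\<bar>weighted_primitive L yd0 (\<lambda>s. p s * fst X s) (clamp 0 1 x)
        - weighted_primitive L yd0 (\<lambda>s. p s * fst Y s) (clamp 0 1 x)\<bar>
      \<le> P * dist (fst X) (fst Y) / L"
    using L clamp01_mem[of x]
    by (intro weighted_primitive_dist integrable_exp_times_p_times_bcontfun) auto
  also have "\<dots> \<le> dist (fst X) (fst Y) / 4"
    using mult_right_mono[OF L(1) zero_le_dist[of "fst X" "fst Y"]] L(2) by (simp add: field_simps)
  finally show "dist (snd (picard_map L y0 yd0 X) x) (snd (picard_map L y0 yd0 Y) x)
      \<le> dist (fst X) (fst Y) / 4"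
    by (simp add: picard_map_apply dist_real_def)
qed

lemma picard_map_contraction:
  assumes P: "\<And>x. x \<in> {0..1} \<Longrightarrow> \<bar>p x\<bar> \<le> P" and L: "4 * (1 + P) \<le> L"
  shows "dist (picard_map L y0 yd0 X) (picard_map L y0 yd0 Y) \<le> 1/2 * dist X Y"
proof -
  have "P \<ge> 0" using P[of 0] by auto
  with L have "L \<ge> 4" "4 * P \<le> L" "L > 0" by (simp_all add: ring_distribs)
  then have "dist (picard_map L y0 yd0 X) (picard_map L y0 yd0 Y)
      \<le> dist (snd X) (snd Y) / 4 + dist (fst X) (fst Y) / 4"
    using picard_map_dist_fst picard_map_dist_snd[OF P] unfolding dist_prod_def
    by (smt (verit) sqrt_sum_squares_le_sum zero_le_dist)
  also have "\<dots> \<le> dist X Y / 4 + dist X Y / 4"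
    by (intro add_mono divide_right_mono dist_snd_le dist_fst_le) auto
  finally show ?thesis by simp
qed

lemma picard_weight_exists:
  obtains L where "\<And>y0 yd0. \<exists>!FG. picard_map L y0 yd0 FG = FG"
proof -
  obtain P where P: "\<And>x. x \<in> {0..1} \<Longrightarrow> \<bar>p x\<bar> \<le> P"
    using p_bounded by metis
  show thesis
  proof (rule that)
    show "\<exists>!FG. picard_map (4 * (1 + P)) y0 yd0 FG = FG" for y0 yd0
      using picard_map_contraction[OF P order_refl] by (intro banach_fix_type[of "1/2"]) auto
  qed
qed

lemma picard_fixed_point_imp_edge_sol:
  assumes fixed: "picard_map L y0 yd0 (F, G) = (F, G)"
  shows "edge_sol a q0 lam (\<lambda>x. exp (L * x) * F x) (\<lambda>x. exp (L * x) * G x)"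
    and "exp (L * 0) * F 0 = y0" "exp (L * 0) * G 0 = yd0"
proof -
  have y: "exp (L * x) * F x = y0 + integral {0..x} (\<lambda>s. exp (L * s) * G s)" if "x \<in> {0..1}" for x
    using picard_map_apply(1)[of L y0 yd0 "(F, G)" x] fixed that
    by (simp add: clamp01_id weighted_primitive_def exp_minus field_simps)
  have yd: "exp (L * x) * G x = yd0 + integral {0..x} (\<lambda>s. exp (L * s) * (p s * F s))"
    if "x \<in> {0..1}" for x
    using picard_map_apply(2)[of L y0 yd0 "(F, G)" x] fixed that
    by (simp add: clamp01_id weighted_primitive_def exp_minus field_simps)
  show "exp (L * 0) * F 0 = y0" "exp (L * 0) * G 0 = yd0"
    using y[of 0] yd[of 0] by simp_all
  show "edge_sol a q0 lam (\<lambda>x. exp (L * x) * F x) (\<lambda>x. exp (L * x) * G x)"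
    unfolding edge_sol_real_iff
  proof (intro ballI conjI)
    fix x :: real assume x: "x \<in> {0..1}"
    show "((\<lambda>x. exp (L * x) * G x) has_integral (exp (L * x) * F x - exp (L * 0) * F 0)) {0..x}"
      using y[OF x] y[of 0] integrable_integral[OF integrable_exp_times_bcontfun[of L G x]] by simp
    have "((\<lambda>s. exp (L * s) * (p s * F s)) has_integral (exp (L * x) * G x - exp (L * 0) * G 0)) {0..x}"
      using yd[OF x] yd[of 0] integrable_integral[OF integrable_exp_times_p_times_bcontfun[OF x]]
      by simp
    then show "((\<lambda>t. p t * (exp (L * t) * F t)) has_integral (exp (L * x) * G x - exp (L * 0) * G 0)) {0..x}"
      by (simp add: mult.left_commute)
  qed
qed

lemma edge_sol_imp_picard_fixed_point:
  fixes y yd :: "real \<Rightarrow> real" and L :: real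
  assumes sol: "edge_sol a q0 lam y yd"
  defines "F \<equiv> extend01 (\<lambda>x. exp (- (L * x)) * y x)"
    and "G \<equiv> extend01 (\<lambda>x. exp (- (L * x)) * yd x)"
  shows "picard_map L (y 0) (yd 0) (F, G) = (F, G)"
proof -
  have cont: "continuous_on {0..1} (\<lambda>x. exp (- (L * x)) * y x)"
      "continuous_on {0..1} (\<lambda>x. exp (- (L * x)) * yd x)"
    using edge_sol_continuous[OF sol] by (auto intro!: continuous_intros)
  have F: "exp (L * s) * F s = y s" and G: "exp (L * s) * G s = yd s" if "s \<in> {0..1}" for s
    unfolding F_def G_def using extend01_eq[OF cont(1) that] extend01_eq[OF cont(2) that]
    by (simp_all add: exp_minus)
  have int: "(yd has_integral (y x - y 0)) {0..x}" "((\<lambda>t. p t * y t) has_integral (yd x - yd 0)) {0..x}"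
    if "x \<in> {0..1}" for x
    using sol that unfolding edge_sol_real_iff by auto
  have "fst (picard_map L (y 0) (yd 0) (F, G)) = F"
    unfolding picard_map_def fst_conv snd_conv F_def
  proof (rule extend01_cong[OF _ cont(1)])
    show "continuous_on {0..1} (weighted_primitive L (y 0) G)"
      by (intro continuous_on_weighted_primitive integrable_exp_times_bcontfun)
    show "weighted_primitive L (y 0) G x = exp (- (L * x)) * y x" if "x \<in> {0..1}" for x
      using that G by (intro weighted_primitive_eq[of yd y x, OF int(1)]) auto
  qed
  moreover have "snd (picard_map L (y 0) (yd 0) (F, G)) = G"
    unfolding picard_map_def fst_conv snd_conv G_def
  proof (rule extend01_cong[OF _ cont(2)])
    show "continuous_on {0..1} (weighted_primitive L (yd 0) (\<lambda>s. p s * F s))"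
      by (intro continuous_on_weighted_primitive integrable_exp_times_p_times_bcontfun) simp
    show "weighted_primitive L (yd 0) (\<lambda>s. p s * F s) x = exp (- (L * x)) * yd x" if "x \<in> {0..1}" for x
      using that F
      by (intro weighted_primitive_eq[of "\<lambda>t. p t * y t" yd x, OF int(2)]) (auto simp: mult.left_commute)
  qed
  ultimately show ?thesis by (metis prod.collapse)
qed

lemma edge_sol_exists: "\<exists>y yd :: real \<Rightarrow> real. edge_sol a q0 lam y yd \<and> y 0 = y0 \<and> yd 0 = yd0"
proof -
  obtain L where "\<exists>!FG. picard_map L y0 yd0 FG = FG"
    using picard_weight_exists by metis
  then obtain F G where "picard_map L y0 yd0 (F, G) = (F, G)"
    by (metis surj_pair)
  from picard_fixed_point_imp_edge_sol[OF this] show ?thesis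
    by (intro exI[of _ "\<lambda>x. exp (L * x) * F x"] exI[of _ "\<lambda>x. exp (L * x) * G x"]) simp
qed

lemma edge_sol_real_unique:
  fixes y yd z zd :: "real \<Rightarrow> real"
  assumes y: "edge_sol a q0 lam y yd" and z: "edge_sol a q0 lam z zd"
    and init: "y 0 = z 0" "yd 0 = zd 0" and x: "x \<in> {0..1}"
  shows "y x = z x \<and> yd x = zd x"
proof -
  define E where "E L f = extend01 (\<lambda>x. exp (- (L * x)) * f x)" for L and f :: "real \<Rightarrow> real"
  obtain L where unique: "\<exists>!FG. picard_map L (y 0) (yd 0) FG = FG"
    using picard_weight_exists by metis
  have "picard_map L (y 0) (yd 0) (E L y, E L yd) = (E L y, E L yd)"
    "picard_map L (y 0) (yd 0) (E L z, E L zd) = (E L z, E L zd)"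
    using edge_sol_imp_picard_fixed_point[OF y, of L] edge_sol_imp_picard_fixed_point[OF z, of L]
    unfolding E_def init by simp_all
  with unique have "E L y = E L z" "E L yd = E L zd" by blast+
  moreover have ext: "E L f x = exp (- (L * x)) * f x" if "continuous_on {0..1} f" for f
    unfolding E_def using that by (intro extend01_eq[OF _ x]) (auto intro!: continuous_intros)
  ultimately have "exp (- (L * x)) * y x = exp (- (L * x)) * z x"
      "exp (- (L * x)) * yd x = exp (- (L * x)) * zd x"
    using ext edge_sol_continuous[OF y] edge_sol_continuous[OF z] by metis+
  then show ?thesis by simp
qed

lemma edge_sol_unique:
  fixes y yd z zd :: "real \<Rightarrow> 'b::euclidean_space"
  assumes y: "edge_sol a q0 lam y yd" and z: "edge_sol a q0 lam z zd"
    and init: "y 0 = z 0" "yd 0 = zd 0" and x: "x \<in> {0..1}"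
  shows "y x = z x \<and> yd x = zd x"
proof -
  have "y x \<bullet> i = z x \<bullet> i \<and> yd x \<bullet> i = zd x \<bullet> i" for i
    by (rule edge_sol_real_unique[OF edge_sol_bounded_linear[OF bounded_linear_inner_left y]
          edge_sol_bounded_linear[OF bounded_linear_inner_left z]]) (use init x in auto)
  then show ?thesis
    by (meson euclidean_eqI)
qed

section \<open>Fundamental solutions and the monodromy\<close>

definition c_fun :: "real \<Rightarrow> real" where "c_fun = fst (fund_c a q0 lam)"
definition c_der :: "real \<Rightarrow> real" where "c_der = snd (fund_c a q0 lam)"
definition s_fun :: "real \<Rightarrow> real" where "s_fun = fst (fund_s a q0 lam)"
definition s_der :: "real \<Rightarrow> real" where "s_der = snd (fund_s a q0 lam)"

lemma fundamental_c: "edge_sol a q0 lam c_fun c_der" "c_fun 0 = 1" "c_der 0 = 0"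
proof -
  obtain y yd :: "real \<Rightarrow> real" where "edge_sol a q0 lam y yd \<and> y 0 = 1 \<and> yd 0 = 0"
    using edge_sol_exists by blast
  then have "\<exists>yy :: (real \<Rightarrow> real) \<times> (real \<Rightarrow> real).
      edge_sol a q0 lam (fst yy) (snd yy) \<and> fst yy 0 = 1 \<and> snd yy 0 = 0"
    by (intro exI[of _ "(y, yd)"]) simp
  from someI_ex[OF this]
  show "edge_sol a q0 lam c_fun c_der" "c_fun 0 = 1" "c_der 0 = 0"
    unfolding c_fun_def c_der_def fund_c_def by auto
qed

lemma fundamental_s: "edge_sol a q0 lam s_fun s_der" "s_fun 0 = 0" "s_der 0 = 1"
proof -
  obtain y yd :: "real \<Rightarrow> real" where "edge_sol a q0 lam y yd \<and> y 0 = 0 \<and> yd 0 = 1"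
    using edge_sol_exists by blast
  then have "\<exists>yy :: (real \<Rightarrow> real) \<times> (real \<Rightarrow> real).
      edge_sol a q0 lam (fst yy) (snd yy) \<and> fst yy 0 = 0 \<and> snd yy 0 = 1"
    by (intro exI[of _ "(y, yd)"]) simp
  from someI_ex[OF this]
  show "edge_sol a q0 lam s_fun s_der" "s_fun 0 = 0" "s_der 0 = 1"
    unfolding s_fun_def s_der_def fund_s_def by auto
qed

lemma D_values:
  "D1 a rho q0 lam = c_fun 1 + rho * c_der 1"
  "D0 a rho q0 lam = s_fun 1 + rho * s_der 1 + rho * (c_fun 1 + rho * c_der 1)"
  by (simp_all add: D0_def D1_def D2_def c_fun_def c_der_def s_fun_def s_der_def)

lemma edge_sol_fundamental_comb:
  "edge_sol a q0 lam (\<lambda>x. c_fun x *\<^sub>R v + s_fun x *\<^sub>R w) (\<lambda>x. c_der x *\<^sub>R v + s_der x *\<^sub>R w)"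
  by (intro edge_sol_add edge_sol_bounded_linear[OF bounded_linear_scaleR_left]
      fundamental_c(1) fundamental_s(1))

lemma edge_sol_eq_fundamental_comb:
  fixes y yd :: "real \<Rightarrow> 'b::euclidean_space"
  assumes "edge_sol a q0 lam y yd" and "x \<in> {0..1}"
  shows "y x = c_fun x *\<^sub>R y 0 + s_fun x *\<^sub>R yd 0" "yd x = c_der x *\<^sub>R y 0 + s_der x *\<^sub>R yd 0"
  using edge_sol_unique[OF assms(1) edge_sol_fundamental_comb _ _ assms(2)]
    fundamental_c(2,3) fundamental_s(2,3)
  by simp_all

lemma D0_nonzero:
  assumes "lam \<notin> Sigma0 a rho q0"
  shows "D0 a rho q0 lam \<noteq> 0"
proof
  assume D0: "D0 a rho q0 lam = 0"
  define u where "u x = c_fun x *\<^sub>R complex_of_real rho + s_fun x *\<^sub>R 1" for x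
  define ud where "ud x = c_der x *\<^sub>R complex_of_real rho + s_der x *\<^sub>R 1" for x
  have sol: "edge_sol a q0 lam u ud"
    unfolding u_def[abs_def] ud_def[abs_def] by (rule edge_sol_fundamental_comb)
  have "\<exists>x\<in>{0..1}. u x \<noteq> 0"
    using edge_sol_vanishing_imp_derivative_0[OF sol] fundamental_c(3) fundamental_s(3) by (auto simp: ud_def)
  moreover have "u 0 - rho *\<^sub>R ud 0 = 0"
    using fundamental_c(2,3) fundamental_s(2,3) by (simp add: u_def ud_def scaleR_conv_of_real)
  moreover have "u 1 + rho *\<^sub>R ud 1 = complex_of_real (D0 a rho q0 lam)"
    unfolding D_values by (simp add: u_def ud_def scaleR_conv_of_real algebra_simps)
  ultimately have "lam \<in> Sigma0 a rho q0"
    using sol D0 unfolding Sigma0_def by auto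
  with assms show False by contradiction
qed

lemma monodromy_reflection:
  assumes symmetric: "\<forall>x\<in>{0..1}. q0 x = q0 (1 - x)"
  shows "c_fun 1 * c_fun 1 - s_fun 1 * c_der 1 = 1"
    and "c_der 1 * (c_fun 1 - s_der 1) = 0"
    and "s_fun 1 * (c_fun 1 - s_der 1) = 0"
    and "s_der 1 * s_der 1 - s_fun 1 * c_der 1 = 1"
proof -
  note c = edge_sol_eq_fundamental_comb[OF edge_sol_reflect[OF symmetric fundamental_c(1)], of 1]
  note s = edge_sol_eq_fundamental_comb[OF edge_sol_reflect[OF symmetric fundamental_s(1)], of 1]
  have "1 = c_fun 1 * c_fun 1 + s_fun 1 * - c_der 1" "0 = c_der 1 * c_fun 1 + s_der 1 * - c_der 1"
    using c fundamental_c(2,3) by simp_all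
  then show "c_fun 1 * c_fun 1 - s_fun 1 * c_der 1 = 1" "c_der 1 * (c_fun 1 - s_der 1) = 0"
    by algebra+
  have "0 = c_fun 1 * s_fun 1 + s_fun 1 * - s_der 1" "-1 = c_der 1 * s_fun 1 + s_der 1 * - s_der 1"
    using s fundamental_s(2,3) by simp_all
  then show "s_fun 1 * (c_fun 1 - s_der 1) = 0" "s_der 1 * s_der 1 - s_fun 1 * c_der 1 = 1"
    by algebra+
qed

end

locale hexagonal_fibre = edge_ode +
  fixes rho m :: real
  assumes symmetric: "\<forall>x\<in>{0..1}. q0 x = q0 (1 - x)"
    and not_in_Sigma0: "lam \<notin> Sigma0 a rho q0"
begin

abbreviation "d0 \<equiv> D0 a rho q0 lam"
abbreviation "d1 \<equiv> D1 a rho q0 lam"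

lemma d0_nonzero: "d0 \<noteq> 0"
  using D0_nonzero not_in_Sigma0 .

text \<open>Reflection alone only gives \<open>M\<inverse> = J M J\<close> with \<open>J = diag(1, -1)\<close>; its second
  branch \<open>s(1) = c'(1) = 0\<close>, \<open>s'(1) = -c(1)\<close> is excluded because it forces \<open>D\<^sub>0 = 0\<close>,
  so no Wronskian argument is needed.\<close>

lemma s_der_1_eq_c_fun_1: "s_der 1 = c_fun 1"
proof (rule ccontr)
  assume ne: "s_der 1 \<noteq> c_fun 1"
  note M = monodromy_reflection[OF symmetric]
  have "c_der 1 = 0" "s_fun 1 = 0" using M(2,3) ne by auto
  moreover have "(s_der 1 - c_fun 1) * (s_der 1 + c_fun 1) = 0"
    using M(1,4) \<open>c_der 1 = 0\<close> by algebra
  ultimately have "s_der 1 + c_fun 1 = 0" using ne by auto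
  with \<open>c_der 1 = 0\<close> \<open>s_fun 1 = 0\<close> have "d0 = 0"
    by (simp add: D_values flip: distrib_left)
  with d0_nonzero show False by contradiction
qed

lemma c_der_d0_minus_d1_sq: "c_der 1 * d0 - d1 * d1 = -1"
  using monodromy_reflection(1)[OF symmetric] s_der_1_eq_c_fun_1 unfolding D_values by algebra

lemma robin_trace:
  fixes u ud :: "real \<Rightarrow> complex"
  assumes "edge_sol a q0 lam u ud"
  shows "u 1 + rho *\<^sub>R ud 1 = (u 0 - rho *\<^sub>R ud 0) * of_real d1 + ud 0 * of_real d0"
    and "ud 1 = (u 0 - rho *\<^sub>R ud 0) * of_real (c_der 1) + ud 0 * of_real d1"
  using edge_sol_eq_fundamental_comb[OF assms, of 1] s_der_1_eq_c_fun_1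
  by (simp_all add: D_values scaleR_conv_of_real algebra_simps)

lemma robin_solution_exists:
  "\<exists>u ud :: real \<Rightarrow> complex. edge_sol a q0 lam u ud \<and> u 0 - rho *\<^sub>R ud 0 = w \<and> ud 0 = b"
  using edge_sol_fundamental_comb[of "w + rho *\<^sub>R b" b] fundamental_c(2,3) fundamental_s(2,3)
  by (intro exI) auto

end

section \<open>The vertex conditions\<close>

text \<open>\<open>w0, w1\<close> are the values \<open>\<omega>\<^sub>0, \<omega>\<^sub>1\<close> at the two vertices of the fundamental domain and
  \<open>b1, b2, b3\<close> the derivatives \<open>u\<^sub>j'(0)\<close> at the first one; \<open>A = a\<close>, \<open>L = \<lambda> m\<close>,
  \<open>C = c'(1)\<close>, \<open>e\<^sub>j = e\<^sup>i\<^sup>\<theta>\<^sup>j\<close>.\<close>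

definition vertex_equations ::
    "complex \<Rightarrow> complex \<Rightarrow> complex \<Rightarrow> complex \<Rightarrow> complex \<Rightarrow> complex \<Rightarrow> complex \<Rightarrow>
     complex \<Rightarrow> complex \<Rightarrow> complex \<Rightarrow> complex \<Rightarrow> complex \<Rightarrow> bool" where
  "vertex_equations A L C d0 d1 e1 e2 w0 w1 b1 b2 b3 \<longleftrightarrow>
     - A * (b1 + b2 + b3) = L * w0 \<and>
     w0 * d1 + b1 * d0 = w1 \<and> e1 * (w0 * d1 + b2 * d0) = w1 \<and> e2 * (w0 * d1 + b3 * d0) = w1 \<and>
     A * (w0 * C + b1 * d1 + e1 * (w0 * C + b2 * d1) + e2 * (w0 * C + b3 * d1)) = L * w1"

lemma vertex_equations_solvable_iff:
  fixes A L C d0 d1 F e1 e2 f1 f2 w0 w1 :: complex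
  assumes "A \<noteq> 0" "d0 \<noteq> 0" and e1: "e1 * f1 = 1" and e2: "e2 * f2 = 1"
    and W: "C * d0 - d1 * d1 = -1" and F: "3 * A * F = 3 * A * d1 - L * d0"
  shows "(\<exists>b1 b2 b3. vertex_equations A L C d0 d1 e1 e2 w0 w1 b1 b2 b3) \<longleftrightarrow>
    (1 + f1 + f2) * w1 = 3 * F * w0 \<and> (1 + e1 + e2) * w0 = 3 * F * w1"
proof -
  obtain Ai d0i where Ai: "A * Ai = 1" and d0i: "d0 * d0i = 1"
    using assms(1,2) by (metis right_inverse)
  show ?thesis
  proof
    assume "\<exists>b1 b2 b3. vertex_equations A L C d0 d1 e1 e2 w0 w1 b1 b2 b3"
    then obtain b1 b2 b3 where a: "- A * (b1 + b2 + b3) = L * w0"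
      and b: "w0 * d1 + b1 * d0 = w1" "e1 * (w0 * d1 + b2 * d0) = w1" "e2 * (w0 * d1 + b3 * d0) = w1"
      and c: "A * (w0 * C + b1 * d1 + e1 * (w0 * C + b2 * d1) + e2 * (w0 * C + b3 * d1)) = L * w1"
      unfolding vertex_equations_def by blast
    show "(1 + f1 + f2) * w1 = 3 * F * w0 \<and> (1 + e1 + e2) * w0 = 3 * F * w1"
    proof
      show "(1 + f1 + f2) * w1 = 3 * F * w0" using Ai d0i e1 e2 F a b by algebra
      show "(1 + e1 + e2) * w0 = 3 * F * w1" using Ai d0i e1 e2 F W c b by algebra
    qed
  next
    assume "(1 + f1 + f2) * w1 = 3 * F * w0 \<and> (1 + e1 + e2) * w0 = 3 * F * w1"
    then have i: "(1 + f1 + f2) * w1 = 3 * F * w0" and ii: "(1 + e1 + e2) * w0 = 3 * F * w1"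
      by blast+
    define b1 b2 b3 where "b1 = (w1 - w0 * d1) * d0i" and "b2 = (f1 * w1 - w0 * d1) * d0i"
      and "b3 = (f2 * w1 - w0 * d1) * d0i"
    have b: "b1 * d0 = w1 - w0 * d1" "b2 * d0 = f1 * w1 - w0 * d1" "b3 * d0 = f2 * w1 - w0 * d1"
      unfolding b1_def b2_def b3_def using d0i by algebra+
    have "- A * (b1 + b2 + b3) = L * w0" using Ai d0i F i b by algebra
    moreover have "w0 * d1 + b1 * d0 = w1" using b(1) by simp
    moreover have "e1 * (w0 * d1 + b2 * d0) = w1" using b(2) e1 by algebra
    moreover have "e2 * (w0 * d1 + b3 * d0) = w1" using b(3) e2 by algebra
    moreover have "A * (w0 * C + b1 * d1 + e1 * (w0 * C + b2 * d1) + e2 * (w0 * C + b3 * d1)) = L * w1"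
      using Ai d0i e1 e2 W F ii b by algebra
    ultimately show "\<exists>b1 b2 b3. vertex_equations A L C d0 d1 e1 e2 w0 w1 b1 b2 b3"
      unfolding vertex_equations_def by blast
  qed
qed

lemma conj_system_nontrivial_iff:
  fixes z :: complex and k :: real
  shows "(\<exists>(w0::complex) (w1::complex). (w0 \<noteq> 0 \<or> w1 \<noteq> 0) \<and> z * w1 = k * w0 \<and> cnj z * w0 = k * w1)
    \<longleftrightarrow> cmod z = \<bar>k\<bar>"
proof
  assume "\<exists>(w0::complex) (w1::complex). (w0 \<noteq> 0 \<or> w1 \<noteq> 0) \<and> z * w1 = k * w0 \<and> cnj z * w0 = k * w1"
  then obtain w0 w1 :: complex where w: "w0 \<noteq> 0 \<or> w1 \<noteq> 0"
    and sys: "z * w1 = k * w0" "cnj z * w0 = k * w1" by blast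
  have "of_real ((cmod z)\<^sup>2) * w0 = of_real (k\<^sup>2) * w0"
  proof -
    have "of_real ((cmod z)\<^sup>2) * w0 = z * (cnj z * w0)"
      by (simp only: complex_norm_square mult.assoc)
    also have "\<dots> = k * (z * w1)" by (simp add: sys(2) mult.left_commute)
    also have "\<dots> = of_real (k\<^sup>2) * w0" by (simp add: sys(1) power2_eq_square)
    finally show ?thesis .
  qed
  moreover have "of_real ((cmod z)\<^sup>2) * w1 = of_real (k\<^sup>2) * w1"
  proof -
    have "of_real ((cmod z)\<^sup>2) * w1 = cnj z * (z * w1)"
      by (simp only: complex_norm_square) (simp add: ac_simps)
    also have "\<dots> = k * (cnj z * w0)" by (simp add: sys(1) mult.left_commute)
    also have "\<dots> = of_real (k\<^sup>2) * w1" by (simp add: sys(2) power2_eq_square)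
    finally show ?thesis .
  qed
  ultimately have "(cmod z)\<^sup>2 = k\<^sup>2"
    using w by (metis mult_cancel_right of_real_eq_iff)
  then show "cmod z = \<bar>k\<bar>"
    by (metis abs_norm_cancel power2_eq_iff_nonneg abs_ge_zero norm_ge_zero power2_abs)
next
  assume z: "cmod z = \<bar>k\<bar>"
  show "\<exists>(w0::complex) (w1::complex). (w0 \<noteq> 0 \<or> w1 \<noteq> 0) \<and> z * w1 = k * w0 \<and> cnj z * w0 = k * w1"
  proof (cases "z = 0")
    case True
    with z show ?thesis by (intro exI[of _ 1] exI[of _ 0]) simp
  next
    case False
    have "cnj z * z = of_real ((cmod z)\<^sup>2)"
      by (simp only: complex_norm_square mult.commute)
    also have "\<dots> = k * k"
      using z by (simp add: power2_eq_square flip: power2_abs)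
    finally show ?thesis
      using False by (intro exI[of _ z] exI[of _ "of_real k"]) (simp add: mult.commute)
  qed
qed

lemma cnj_Sfun: "cnj (Sfun th1 th2) = 1 + exp (\<i> * complex_of_real th1) + exp (\<i> * complex_of_real th2)"
  by (simp add: Sfun_def exp_cnj)

context hexagonal_fibre
begin

definition dispersion :: real where
  "dispersion = d1 - lam * m / (3 * a) * d0"

lemma dispersion_eq: "3 * a * dispersion = 3 * a * d1 - lam * m * d0"
  using a_pos by (simp add: dispersion_def field_simps)

abbreviation fibre_vertex_equations where
  "fibre_vertex_equations th1 th2 \<equiv> vertex_equations (of_real a) (of_real (lam * m))
     (of_real (c_der 1)) (of_real d0) (of_real d1) (exp (\<i> * of_real th1)) (exp (\<i> * of_real th2))"

lemma spec_theta_imp_vertex_equations: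
  assumes "lam \<in> spec_theta a rho m q0 th1 th2"
  shows "\<exists>w0 w1 b1 b2 b3. (w0 \<noteq> 0 \<or> w1 \<noteq> 0) \<and> fibre_vertex_equations th1 th2 w0 w1 b1 b2 b3"
proof -
  obtain u1 u1d u2 u2d u3 u3d w0 w1 where
    s: "edge_sol a q0 lam u1 u1d" "edge_sol a q0 lam u2 u2d" "edge_sol a q0 lam u3 u3d"
    and i: "u1 0 - rho *\<^sub>R u1d 0 = w0" "u2 0 - rho *\<^sub>R u2d 0 = w0" "u3 0 - rho *\<^sub>R u3d 0 = w0"
    and ha: "- a *\<^sub>R (u1d 0 + u2d 0 + u3d 0) = (lam * m) *\<^sub>R w0"
    and o: "u1 1 + rho *\<^sub>R u1d 1 = w1"
      "exp (\<i> * complex_of_real th1) * (u2 1 + rho *\<^sub>R u2d 1) = w1"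
      "exp (\<i> * complex_of_real th2) * (u3 1 + rho *\<^sub>R u3d 1) = w1"
    and hc: "a *\<^sub>R (u1d 1 + exp (\<i> * complex_of_real th1) * u2d 1 + exp (\<i> * complex_of_real th2) * u3d 1)
        = (lam * m) *\<^sub>R w1"
    and nt: "(\<exists>x\<in>{0..1}. u1 x \<noteq> 0 \<or> u2 x \<noteq> 0 \<or> u3 x \<noteq> 0) \<or> w0 \<noteq> 0 \<or> w1 \<noteq> 0"
    using assms unfolding spec_theta_def by blast
  have V: "fibre_vertex_equations th1 th2 w0 w1 (u1d 0) (u2d 0) (u3d 0)"
    unfolding vertex_equations_def
    using ha o hc robin_trace[OF s(1)] robin_trace[OF s(2)] robin_trace[OF s(3)] i
    by (simp add: scaleR_conv_of_real)
  moreover have "w0 \<noteq> 0 \<or> w1 \<noteq> 0"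
  proof (rule ccontr)
    assume "\<not> (w0 \<noteq> 0 \<or> w1 \<noteq> 0)"
    then have "w0 = 0" "w1 = 0" by auto
    with V d0_nonzero have "u1d 0 = 0" "u2d 0 = 0" "u3d 0 = 0"
      unfolding vertex_equations_def by auto
    with i \<open>w0 = 0\<close> have "u1 0 = 0" "u2 0 = 0" "u3 0 = 0" by auto
    with \<open>u1d 0 = 0\<close> \<open>u2d 0 = 0\<close> \<open>u3d 0 = 0\<close>
    have "u1 x = 0 \<and> u2 x = 0 \<and> u3 x = 0" if "x \<in> {0..1}" for x
      using edge_sol_eq_fundamental_comb(1)[OF s(1) that] edge_sol_eq_fundamental_comb(1)[OF s(2) that]
        edge_sol_eq_fundamental_comb(1)[OF s(3) that] by simp
    with nt \<open>w0 = 0\<close> \<open>w1 = 0\<close> show False by auto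
  qed
  ultimately show ?thesis by blast
qed

lemma vertex_equations_imp_spec_theta:
  assumes "w0 \<noteq> 0 \<or> w1 \<noteq> 0" and V: "fibre_vertex_equations th1 th2 w0 w1 b1 b2 b3"
  shows "lam \<in> spec_theta a rho m q0 th1 th2"
proof -
  obtain u1 u1d where u1: "edge_sol a q0 lam u1 u1d" "u1 0 - rho *\<^sub>R u1d 0 = w0" "u1d 0 = b1"
    using robin_solution_exists by blast
  obtain u2 u2d where u2: "edge_sol a q0 lam u2 u2d" "u2 0 - rho *\<^sub>R u2d 0 = w0" "u2d 0 = b2"
    using robin_solution_exists by blast
  obtain u3 u3d where u3: "edge_sol a q0 lam u3 u3d" "u3 0 - rho *\<^sub>R u3d 0 = w0" "u3d 0 = b3"
    using robin_solution_exists by blast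
  have "- a *\<^sub>R (u1d 0 + u2d 0 + u3d 0) = (lam * m) *\<^sub>R w0"
    and "u1 1 + rho *\<^sub>R u1d 1 = w1"
    and "exp (\<i> * complex_of_real th1) * (u2 1 + rho *\<^sub>R u2d 1) = w1"
    and "exp (\<i> * complex_of_real th2) * (u3 1 + rho *\<^sub>R u3d 1) = w1"
    and "a *\<^sub>R (u1d 1 + exp (\<i> * complex_of_real th1) * u2d 1 + exp (\<i> * complex_of_real th2) * u3d 1)
        = (lam * m) *\<^sub>R w1"
    using V u1 u2 u3 robin_trace[OF u1(1)] robin_trace[OF u2(1)] robin_trace[OF u3(1)]
    unfolding vertex_equations_def by (simp_all add: scaleR_conv_of_real)
  with u1 u2 u3 assms(1) show ?thesis
    unfolding spec_theta_def by blast
qed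

lemma spec_theta_iff:
  "lam \<in> spec_theta a rho m q0 th1 th2 \<longleftrightarrow>
    dispersion = cmod (Sfun th1 th2) / 3 \<or> dispersion = - (cmod (Sfun th1 th2) / 3)"
proof -
  have "lam \<in> spec_theta a rho m q0 th1 th2 \<longleftrightarrow>
      (\<exists>w0 w1. (w0 \<noteq> 0 \<or> w1 \<noteq> 0) \<and> (\<exists>b1 b2 b3. fibre_vertex_equations th1 th2 w0 w1 b1 b2 b3))"
  proof
    assume "lam \<in> spec_theta a rho m q0 th1 th2"
    from spec_theta_imp_vertex_equations[OF this]
    show "\<exists>w0 w1. (w0 \<noteq> 0 \<or> w1 \<noteq> 0) \<and> (\<exists>b1 b2 b3. fibre_vertex_equations th1 th2 w0 w1 b1 b2 b3)"
      by blast
  qed (auto intro: vertex_equations_imp_spec_theta)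
  also have "\<dots> \<longleftrightarrow> (\<exists>(w0::complex) (w1::complex). (w0 \<noteq> 0 \<or> w1 \<noteq> 0) \<and>
      Sfun th1 th2 * w1 = (3 * dispersion) * w0 \<and> cnj (Sfun th1 th2) * w0 = (3 * dispersion) * w1)"
  proof (intro ex_cong1 conj_cong refl)
    fix w0 w1 :: complex
    have "3 * complex_of_real a * of_real dispersion
        = 3 * of_real a * of_real d1 - of_real (lam * m) * of_real d0"
      using arg_cong[OF dispersion_eq, of complex_of_real] by simp
    moreover have "complex_of_real (c_der 1) * of_real d0 - of_real d1 * of_real d1 = -1"
      using arg_cong[OF c_der_d0_minus_d1_sq, of complex_of_real] by simp
    moreover have "exp (\<i> * complex_of_real t) * exp (- \<i> * complex_of_real t) = 1" for t
      by (simp flip: exp_add)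
    ultimately show "(\<exists>b1 b2 b3. fibre_vertex_equations th1 th2 w0 w1 b1 b2 b3)
        \<longleftrightarrow> Sfun th1 th2 * w1 = (3 * dispersion) * w0 \<and> cnj (Sfun th1 th2) * w0 = (3 * dispersion) * w1"
      unfolding cnj_Sfun Sfun_def using a_pos d0_nonzero
      by (subst vertex_equations_solvable_iff) (simp_all add: mult.assoc exp_cnj)
  qed
  also have "\<dots> \<longleftrightarrow> cmod (Sfun th1 th2) = \<bar>3 * dispersion\<bar>"
    by (rule conj_system_nontrivial_iff)
  also have "\<dots> \<longleftrightarrow> dispersion = cmod (Sfun th1 th2) / 3 \<or> dispersion = - (cmod (Sfun th1 th2) / 3)"
    using norm_ge_zero[of "Sfun th1 th2"] by arith
  finally show ?thesis .
qed

end

theorem mainTheorem2: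
  fixes a kinv m lam :: real and q0 :: "real \<Rightarrow> real"
  assumes "a > 0" and "kinv \<ge> 0" and "m \<ge> 0"
    and "q0 \<in> borel_measurable (lebesgue_on {0..1})"
    and "\<exists>B. \<forall>x\<in>{0..1}. \<bar>q0 x\<bar> \<le> B"
    and "\<forall>x\<in>{0..1}. q0 x = q0 (1 - x)"
    and "lam \<notin> Sigma0 a (a * kinv) q0"
  shows "lam \<in> (\<Union>th1\<in>{-pi..pi}. \<Union>th2\<in>{-pi..pi}. spec_theta a (a * kinv) m q0 th1 th2) \<longleftrightarrow>
    (\<exists>th1\<in>{-pi..pi}. \<exists>th2\<in>{-pi..pi}.
       D1 a (a * kinv) q0 lam - lam * m / (3 * a) * D0 a (a * kinv) q0 lam = cmod (Sfun th1 th2) / 3 \<or>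
       D1 a (a * kinv) q0 lam - lam * m / (3 * a) * D0 a (a * kinv) q0 lam = - (cmod (Sfun th1 th2) / 3))"
proof -
  interpret hexagonal_fibre a q0 lam "a * kinv" m
    by unfold_locales (fact assms)+
  show ?thesis
    unfolding UN_iff spec_theta_iff dispersion_def ..
qed

end
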